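(* Let $\mathbf A$ be a non-trivial finite Cornish algebra of type $F=F^+\,\dot\cup\,F^-$. If $F^-=\emptyset$, then $\mathbf A$ is not quasi-primal.
   Context: Let $F=F^+\,\dot\cup\,F^-$ be a set of unary operation symbols. A Cornish algebra of type $F$ is an algebra $\langle A;\vee,\wedge,\{f^{\mathbf A}\}_{f\in F},0,1\rangle$ whose reduct $\langle A;\vee,\wedge,0,1\rangle$ is a bounded distributive lattice, with $f^{\mathbf A}$ an endomorphism of that bounded lattice for $f\in F^+$ and a dual endomorphism for $f\in F^-$. A finite algebra is quasi-primal if the ternary discriminator ($\tau(x,y,z)=x$ if $x\ne y$, $=z$ if $x=y$) is a term function of it. *)

theory Defs
  imports Main
begin

definition bdl :: "'a set \<Rightarrow> ('a \<Rightarrow> 'a \<Rightarrow> 'a) \<Rightarrow> ('a \<Rightarrow> 'a \<Rightarrow> 'a) \<Rightarrow> 'a \<Rightarrow> 'a \<Rightarrow> bool" where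
  "bdl A jn mt z u \<longleftrightarrow>
     z \<in> A \<and> u \<in> A \<and>
     (\<forall>x\<in>A. \<forall>y\<in>A. jn x y \<in> A \<and> mt x y \<in> A) \<and>
     (\<forall>x\<in>A. \<forall>y\<in>A. \<forall>w\<in>A. jn (jn x y) w = jn x (jn y w) \<and> mt (mt x y) w = mt x (mt y w)) \<and>
     (\<forall>x\<in>A. \<forall>y\<in>A. jn x y = jn y x \<and> mt x y = mt y x) \<and>
     (\<forall>x\<in>A. \<forall>y\<in>A. jn x (mt x y) = x \<and> mt x (jn x y) = x) \<and>
     (\<forall>x\<in>A. \<forall>y\<in>A. \<forall>w\<in>A. mt x (jn y w) = jn (mt x y) (mt x w)) \<and>
     (\<forall>x\<in>A. jn z x = x \<and> mt u x = x)"

definition lat_endo :: "'a set \<Rightarrow> ('a \<Rightarrow> 'a \<Rightarrow> 'a) \<Rightarrow> ('a \<Rightarrow> 'a \<Rightarrow> 'a) \<Rightarrow> 'a \<Rightarrow> 'a \<Rightarrow> ('a \<Rightarrow> 'a) \<Rightarrow> bool" where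
  "lat_endo A jn mt z u g \<longleftrightarrow>
     (\<forall>x\<in>A. g x \<in> A) \<and>
     (\<forall>x\<in>A. \<forall>y\<in>A. g (jn x y) = jn (g x) (g y) \<and> g (mt x y) = mt (g x) (g y)) \<and>
     g z = z \<and> g u = u"

definition lat_dual_endo :: "'a set \<Rightarrow> ('a \<Rightarrow> 'a \<Rightarrow> 'a) \<Rightarrow> ('a \<Rightarrow> 'a \<Rightarrow> 'a) \<Rightarrow> 'a \<Rightarrow> 'a \<Rightarrow> ('a \<Rightarrow> 'a) \<Rightarrow> bool" where
  "lat_dual_endo A jn mt z u g \<longleftrightarrow>
     (\<forall>x\<in>A. g x \<in> A) \<and>
     (\<forall>x\<in>A. \<forall>y\<in>A. g (jn x y) = mt (g x) (g y) \<and> g (mt x y) = jn (g x) (g y)) \<and>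
     g z = u \<and> g u = z"

definition cornish_algebra :: "'a set \<Rightarrow> ('a \<Rightarrow> 'a \<Rightarrow> 'a) \<Rightarrow> ('a \<Rightarrow> 'a \<Rightarrow> 'a) \<Rightarrow> 'a \<Rightarrow> 'a \<Rightarrow>
    'f set \<Rightarrow> 'f set \<Rightarrow> ('f \<Rightarrow> 'a \<Rightarrow> 'a) \<Rightarrow> bool" where
  "cornish_algebra A jn mt z u Fp Fm ops \<longleftrightarrow>
     bdl A jn mt z u \<and> Fp \<inter> Fm = {} \<and>
     (\<forall>f\<in>Fp. lat_endo A jn mt z u (ops f)) \<and>
     (\<forall>f\<in>Fm. lat_dual_endo A jn mt z u (ops f))"

inductive_set term3 :: "('a \<Rightarrow> 'a \<Rightarrow> 'a) \<Rightarrow> ('a \<Rightarrow> 'a \<Rightarrow> 'a) \<Rightarrow> 'a \<Rightarrow> 'a \<Rightarrow>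
    'f set \<Rightarrow> ('f \<Rightarrow> 'a \<Rightarrow> 'a) \<Rightarrow> ('a \<Rightarrow> 'a \<Rightarrow> 'a \<Rightarrow> 'a) set"
  for jn mt z u F ops where
  pr1: "(\<lambda>x y w. x) \<in> term3 jn mt z u F ops"
| pr2: "(\<lambda>x y w. y) \<in> term3 jn mt z u F ops"
| pr3: "(\<lambda>x y w. w) \<in> term3 jn mt z u F ops"
| cz: "(\<lambda>x y w. z) \<in> term3 jn mt z u F ops"
| cu: "(\<lambda>x y w. u) \<in> term3 jn mt z u F ops"
| jn: "s \<in> term3 jn mt z u F ops \<Longrightarrow> t \<in> term3 jn mt z u F ops \<Longrightarrow>
        (\<lambda>x y w. jn (s x y w) (t x y w)) \<in> term3 jn mt z u F ops"
| mt: "s \<in> term3 jn mt z u F ops \<Longrightarrow> t \<in> term3 jn mt z u F ops \<Longrightarrow>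
        (\<lambda>x y w. mt (s x y w) (t x y w)) \<in> term3 jn mt z u F ops"
| op: "f \<in> F \<Longrightarrow> s \<in> term3 jn mt z u F ops \<Longrightarrow>
        (\<lambda>x y w. ops f (s x y w)) \<in> term3 jn mt z u F ops"

definition discriminator :: "'a \<Rightarrow> 'a \<Rightarrow> 'a \<Rightarrow> 'a" where
  "discriminator x y w = (if x \<noteq> y then x else w)"

definition quasi_primal :: "'a set \<Rightarrow> ('a \<Rightarrow> 'a \<Rightarrow> 'a) \<Rightarrow> ('a \<Rightarrow> 'a \<Rightarrow> 'a) \<Rightarrow> 'a \<Rightarrow> 'a \<Rightarrow>
    'f set \<Rightarrow> ('f \<Rightarrow> 'a \<Rightarrow> 'a) \<Rightarrow> bool" where
  "quasi_primal A jn mt z u F ops \<longleftrightarrow> finite A \<and>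
     (\<exists>t\<in>term3 jn mt z u F ops. \<forall>x\<in>A. \<forall>y\<in>A. \<forall>w\<in>A. t x y w = discriminator x y w)"

end

theory Submission
  imports Defs
begin

text \<open>Lattice endomorphisms are order-preserving, so every term function of a Cornish
  algebra without dual endomorphisms is monotone in each argument (the lattice order being
  \<open>a \<le> b \<longleftrightarrow> jn a b = b\<close>). The discriminator is not: on \<open>0 < 1\<close> it sends
  \<open>(0,0,1)\<close> to \<open>1\<close> but the larger triple \<open>(0,1,1)\<close> to \<open>0\<close>.\<close>

lemma
  assumes "bdl A jn mt z u" "a \<in> A" "b \<in> A"
  shows bdl_join_closed: "jn a b \<in> A" and bdl_meet_closed: "mt a b \<in> A"
    and bdl_join_commute: "jn a b = jn b a" and bdl_meet_commute: "mt a b = mt b a"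
    and bdl_join_absorb: "jn a (mt a b) = a" and bdl_meet_absorb: "mt a (jn a b) = a"
  using assms unfolding bdl_def by blast+

lemma
  assumes "bdl A jn mt z u" "a \<in> A" "b \<in> A" "c \<in> A"
  shows bdl_join_assoc: "jn (jn a b) c = jn a (jn b c)"
    and bdl_meet_assoc: "mt (mt a b) c = mt a (mt b c)"
  using assms unfolding bdl_def by blast+

lemma
  assumes "bdl A jn mt z u"
  shows bdl_bot_in: "z \<in> A" and bdl_top_in: "u \<in> A"
    and bdl_join_bot: "a \<in> A \<Longrightarrow> jn z a = a" and bdl_meet_top: "a \<in> A \<Longrightarrow> mt u a = a"
  using assms unfolding bdl_def by blast+

lemma bdl_join_idem:
  assumes bd: "bdl A jn mt z u" and a: "a \<in> A"
  shows "jn a a = a"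
  using bdl_join_absorb[OF bd a bdl_join_closed[OF bd a a]] bdl_meet_absorb[OF bd a a] by simp

lemma bdl_join_eq_iff_meet_eq:
  assumes bd: "bdl A jn mt z u" and ab: "a \<in> A" "b \<in> A"
  shows "jn a b = b \<longleftrightarrow> mt a b = a"
  by (metis bdl_join_absorb[OF bd] bdl_meet_absorb[OF bd] bdl_join_commute[OF bd]
      bdl_meet_commute[OF bd] ab)

lemma ac_interchange_on:
  assumes closed: "\<And>x y. x \<in> A \<Longrightarrow> y \<in> A \<Longrightarrow> f x y \<in> A"
    and assoc: "\<And>x y w. x \<in> A \<Longrightarrow> y \<in> A \<Longrightarrow> w \<in> A \<Longrightarrow> f (f x y) w = f x (f y w)"
    and commute: "\<And>x y. x \<in> A \<Longrightarrow> y \<in> A \<Longrightarrow> f x y = f y x"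
    and in_A: "a \<in> A" "b \<in> A" "c \<in> A" "d \<in> A"
  shows "f (f a c) (f b d) = f (f a b) (f c d)"
proof -
  have "f (f a c) (f b d) = f a (f (f c b) d)"
    using in_A closed by (simp add: assoc)
  also have "\<dots> = f a (f (f b c) d)" using in_A by (simp add: commute)
  also have "\<dots> = f (f a b) (f c d)"
    using in_A closed by (simp add: assoc)
  finally show ?thesis .
qed

lemma bdl_join_mono:
  assumes bd: "bdl A jn mt z u" and in_A: "a \<in> A" "b \<in> A" "c \<in> A" "d \<in> A"
    and "jn a b = b" "jn c d = d"
  shows "jn (jn a c) (jn b d) = jn b d"
proof -
  have "jn (jn a c) (jn b d) = jn (jn a b) (jn c d)"
    by (rule ac_interchange_on[OF bdl_join_closed[OF bd] bdl_join_assoc[OF bd]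
          bdl_join_commute[OF bd] in_A])
  then show ?thesis using assms(6,7) by simp
qed

lemma bdl_meet_mono:
  assumes bd: "bdl A jn mt z u" and in_A: "a \<in> A" "b \<in> A" "c \<in> A" "d \<in> A"
    and le: "jn a b = b" "jn c d = d"
  shows "jn (mt a c) (mt b d) = mt b d"
proof -
  have "mt a b = a" "mt c d = c"
    using le bdl_join_eq_iff_meet_eq[OF bd] in_A by blast+
  moreover have "mt (mt a c) (mt b d) = mt (mt a b) (mt c d)"
    by (rule ac_interchange_on[OF bdl_meet_closed[OF bd] bdl_meet_assoc[OF bd]
          bdl_meet_commute[OF bd] in_A])
  ultimately have "mt (mt a c) (mt b d) = mt a c" by simp
  then show ?thesis
    using bdl_join_eq_iff_meet_eq[OF bd] bdl_meet_closed[OF bd] in_A by blast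
qed

lemma lat_endo_mono:
  assumes "lat_endo A jn mt z u g" "a \<in> A" "b \<in> A" "jn a b = b"
  shows "jn (g a) (g b) = g b"
  using assms unfolding lat_endo_def by metis

lemma bdl_bot_neq_top:
  assumes bd: "bdl A jn mt z u" and nontriv: "\<exists>x\<in>A. \<exists>y\<in>A. x \<noteq> y"
  shows "z \<noteq> u"
proof
  assume "z = u"
  have "x = z" if x: "x \<in> A" for x
  proof -
    have "x = mt u (jn z x)" using bdl_join_bot[OF bd x] bdl_meet_top[OF bd x] by simp
    also have "\<dots> = z" using bdl_meet_absorb[OF bd bdl_bot_in[OF bd] x] \<open>z = u\<close> by simp
    finally show ?thesis .
  qed
  then show False using nontriv by metis
qed

lemma term3_closed:
  assumes bd: "bdl A jn mt z u" and endo: "\<forall>f\<in>F. lat_endo A jn mt z u (ops f)"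
    and t: "t \<in> term3 jn mt z u F ops"
    and "x \<in> A" "y \<in> A" "w \<in> A"
  shows "t x y w \<in> A"
  using t assms(4-6)
proof (induction rule: term3.induct)
  case (jn s r)
  then show ?case by (simp add: bdl_join_closed[OF bd])
next
  case (mt s r)
  then show ?case by (simp add: bdl_meet_closed[OF bd])
next
  case (op f s)
  then show ?case using endo unfolding lat_endo_def by blast
qed (simp_all add: bdl_bot_in[OF bd] bdl_top_in[OF bd])

lemma term3_mono:
  assumes bd: "bdl A jn mt z u" and endo: "\<forall>f\<in>F. lat_endo A jn mt z u (ops f)"
    and t: "t \<in> term3 jn mt z u F ops"
    and in_A: "x \<in> A" "y \<in> A" "w \<in> A" "x' \<in> A" "y' \<in> A" "w' \<in> A"
    and le: "jn x x' = x'" "jn y y' = y'" "jn w w' = w'"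
  shows "jn (t x y w) (t x' y' w') = t x' y' w'"
  using t
proof (induction rule: term3.induct)
  case cz
  show ?case by (rule bdl_join_bot[OF bd bdl_bot_in[OF bd]])
next
  case cu
  show ?case by (rule bdl_join_idem[OF bd bdl_top_in[OF bd]])
next
  case (jn s r)
  note closed = term3_closed[OF bd endo _ in_A(1-3)] term3_closed[OF bd endo _ in_A(4-6)]
  show ?case
    using bdl_join_mono[OF bd closed[OF jn.hyps(1)] closed[OF jn.hyps(2)] jn.IH] .
next
  case (mt s r)
  note closed = term3_closed[OF bd endo _ in_A(1-3)] term3_closed[OF bd endo _ in_A(4-6)]
  show ?case
    using bdl_meet_mono[OF bd closed[OF mt.hyps(1)] closed[OF mt.hyps(2)] mt.IH] .
next
  case (op f s)
  have "lat_endo A jn mt z u (ops f)" using endo op.hyps(1) by blast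
  from lat_endo_mono[OF this term3_closed[OF bd endo op.hyps(2) in_A(1-3)]
      term3_closed[OF bd endo op.hyps(2) in_A(4-6)] op.IH]
  show ?case .
qed (simp_all add: le)

theorem theorem5p7:
  fixes A :: "'a set" and jn mt :: "'a \<Rightarrow> 'a \<Rightarrow> 'a" and z u :: 'a
    and Fp Fm :: "'f set" and ops :: "'f \<Rightarrow> 'a \<Rightarrow> 'a"
  assumes "cornish_algebra A jn mt z u Fp Fm ops"
    and "finite A"
    and "\<exists>x\<in>A. \<exists>y\<in>A. x \<noteq> y"
    and "Fm = {}"
  shows "\<not> quasi_primal A jn mt z u (Fp \<union> Fm) ops"
proof
  assume "quasi_primal A jn mt z u (Fp \<union> Fm) ops"
  then obtain t where t: "t \<in> term3 jn mt z u (Fp \<union> Fm) ops"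
    and disc: "\<forall>x\<in>A. \<forall>y\<in>A. \<forall>w\<in>A. t x y w = discriminator x y w"
    unfolding quasi_primal_def by auto
  have bd: "bdl A jn mt z u" and endo: "\<forall>f\<in>Fp \<union> Fm. lat_endo A jn mt z u (ops f)"
    using assms(1,4) unfolding cornish_algebra_def by auto
  have z: "z \<in> A" and u: "u \<in> A" using bdl_bot_in[OF bd] bdl_top_in[OF bd] .
  have "z \<noteq> u" using bdl_bot_neq_top[OF bd assms(3)] .
  then have "t z z u = u" "t z u u = z" using disc z u by (auto simp: discriminator_def)
  moreover have "jn (t z z u) (t z u u) = t z u u"
    using term3_mono[OF bd endo t z z u z u u] bdl_join_idem[OF bd] bdl_join_bot[OF bd] z u
    by simp
  ultimately have "jn u z = z" by simp
  moreover have "jn u z = u"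
    using bdl_join_commute[OF bd u z] bdl_join_bot[OF bd u] by simp
  ultimately show False using \<open>z \<noteq> u\<close> by simp
qed

end
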